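(* Let $G$ be a finite, simple, undirected, connected graph with $n$ vertices and let $\ell$ be an integer with $2\leq\ell\leq n-1$. Then $\beta_\ell^s(G)=\ell+1$ if and only if $n=\ell+1$ or $G$ is isomorphic to the star $K_{1,\ell+1}$.
   Context: $d$ is the shortest-path distance; for nonempty $X\subseteq V(G)$, $d(s,X)=\min_{x\in X}d(s,x)$; for $S=\{s_1,\dots,s_k\}$, $\mathcal{D}_S(X)=(d(s_1,X),\dots,d(s_k,X))$. $S\subseteq V(G)$ is an $\ell$-solid-resolving set if $\mathcal{D}_S(X)\neq\mathcal{D}_S(Y)$ for all distinct nonempty $X,Y\subseteq V(G)$ with $|X|\leq\ell$ ($Y$ of arbitrary size). $\beta_\ell^s(G)$ is the minimum cardinality of an $\ell$-solid-resolving set of $G$. *)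

theory Defs
  imports Main
begin

definition simple_graph :: "'a set \<Rightarrow> ('a \<Rightarrow> 'a \<Rightarrow> bool) \<Rightarrow> bool" where
  "simple_graph V E \<longleftrightarrow> finite V \<and> (\<forall>x y. E x y \<longrightarrow> x \<in> V \<and> y \<in> V)
     \<and> (\<forall>x y. E x y \<longrightarrow> E y x) \<and> (\<forall>x. \<not> E x x)"

definition is_walk :: "'a set \<Rightarrow> ('a \<Rightarrow> 'a \<Rightarrow> bool) \<Rightarrow> 'a list \<Rightarrow> bool" where
  "is_walk V E xs \<longleftrightarrow> xs \<noteq> [] \<and> set xs \<subseteq> V \<and>
     (\<forall>i. Suc i < length xs \<longrightarrow> E (xs ! i) (xs ! Suc i))"

definition connected_graph :: "'a set \<Rightarrow> ('a \<Rightarrow> 'a \<Rightarrow> bool) \<Rightarrow> bool" where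
  "connected_graph V E \<longleftrightarrow> V \<noteq> {} \<and>
     (\<forall>u\<in>V. \<forall>v\<in>V. \<exists>xs. is_walk V E xs \<and> hd xs = u \<and> last xs = v)"

definition dist :: "'a set \<Rightarrow> ('a \<Rightarrow> 'a \<Rightarrow> bool) \<Rightarrow> 'a \<Rightarrow> 'a \<Rightarrow> nat" where
  "dist V E u v = (LEAST k. \<exists>xs. is_walk V E xs \<and> hd xs = u \<and> last xs = v \<and> length xs = Suc k)"

definition set_dist :: "'a set \<Rightarrow> ('a \<Rightarrow> 'a \<Rightarrow> bool) \<Rightarrow> 'a \<Rightarrow> 'a set \<Rightarrow> nat" where
  "set_dist V E s X = Min (dist V E s ` X)"

text \<open>The vectors D_S(X), D_S(Y) differ
iff some coordinate s \<in> S differs.\<close>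
definition solid_resolving :: "'a set \<Rightarrow> ('a \<Rightarrow> 'a \<Rightarrow> bool) \<Rightarrow> nat \<Rightarrow> 'a set \<Rightarrow> bool" where
  "solid_resolving V E l S \<longleftrightarrow> S \<subseteq> V \<and>
     (\<forall>X Y. X \<subseteq> V \<and> Y \<subseteq> V \<and> X \<noteq> {} \<and> Y \<noteq> {} \<and> card X \<le> l \<and> X \<noteq> Y \<longrightarrow>
        (\<exists>s\<in>S. set_dist V E s X \<noteq> set_dist V E s Y))"

definition solid_metric_dim :: "'a set \<Rightarrow> ('a \<Rightarrow> 'a \<Rightarrow> bool) \<Rightarrow> nat \<Rightarrow> nat" where
  "solid_metric_dim V E l = (LEAST k. \<exists>S. solid_resolving V E l S \<and> card S = k)"

definition graph_iso :: "'a set \<Rightarrow> ('a \<Rightarrow> 'a \<Rightarrow> bool) \<Rightarrow> 'b set \<Rightarrow> ('b \<Rightarrow> 'b \<Rightarrow> bool) \<Rightarrow> bool" where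
  "graph_iso V E W F \<longleftrightarrow> (\<exists>f. bij_betw f V W \<and> (\<forall>x\<in>V. \<forall>y\<in>V. E x y \<longleftrightarrow> F (f x) (f y)))"

definition star_vertices :: "nat \<Rightarrow> nat set" where
  "star_vertices m = {0..m}"

definition star_edge :: "nat \<Rightarrow> nat \<Rightarrow> nat \<Rightarrow> bool" where
  "star_edge m x y \<longleftrightarrow> x \<le> m \<and> y \<le> m \<and> ((x = 0 \<and> y \<noteq> 0) \<or> (y = 0 \<and> x \<noteq> 0))"

end

theory Submission
  imports Defs
begin

text \<open>A nonempty \<open>l\<close>-solid-resolving set \<open>S\<close> with at most \<open>l\<close> vertices cannot separate
  \<open>S\<close> from \<open>V\<close>, since every vertex of \<open>S\<close> is at distance 0 from both; and \<open>V\<close> itself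
  resolves.  So \<open>\<beta>\<^sub>l\<^sup>s(G) = l + 1\<close> exactly when some resolving \<open>S\<close> has \<open>l + 1\<close> vertices.
  If \<open>S \<noteq> V\<close>, comparing sets that differ only outside \<open>S\<close> shows that \<open>S\<close> is independent
  and that a single vertex lies outside \<open>S\<close>; as every vertex has a neighbour, \<open>G\<close> is then
  the star with leaves \<open>S\<close>.  Conversely, the leaves of a star on \<open>l + 2\<close> vertices resolve:
  a leaf missing from \<open>X\<close> and \<open>Y\<close> is at distance 1 from either set exactly when it contains
  the centre.\<close>

definition is_star_centre :: "'a set \<Rightarrow> ('a \<Rightarrow> 'a \<Rightarrow> bool) \<Rightarrow> 'a \<Rightarrow> bool" where
  "is_star_centre V E c \<longleftrightarrow> c \<in> V \<and> (\<forall>x\<in>V. \<forall>y\<in>V. E x y \<longleftrightarrow> (x = c) \<noteq> (y = c))"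

lemma solid_resolving_subset: "solid_resolving V E l S \<Longrightarrow> S \<subseteq> V"
  unfolding solid_resolving_def by blast

locale connected_simple_graph =
  fixes V :: "'a set" and E :: "'a \<Rightarrow> 'a \<Rightarrow> bool"
  assumes simple: "simple_graph V E" and connected: "connected_graph V E"
begin

lemma finite_V: "finite V"
  using simple unfolding simple_graph_def by blast

lemma edge_in_V: "E x y \<Longrightarrow> x \<in> V \<and> y \<in> V"
  using simple unfolding simple_graph_def by blast

lemma edge_sym: "E x y \<Longrightarrow> E y x"
  using simple unfolding simple_graph_def by blast

lemma edge_irrefl: "\<not> E x x"
  using simple unfolding simple_graph_def by blast

lemma shortest_walk_exists:
  assumes "u \<in> V" "v \<in> V"
  shows "\<exists>xs. is_walk V E xs \<and> hd xs = u \<and> last xs = v \<and> length xs = Suc (dist V E u v)"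
proof -
  obtain xs where xs: "is_walk V E xs" "hd xs = u" "last xs = v"
    using connected assms unfolding connected_graph_def by blast
  then obtain k where "length xs = Suc k"
    unfolding is_walk_def by (cases xs) auto
  with xs have "\<exists>k xs. is_walk V E xs \<and> hd xs = u \<and> last xs = v \<and> length xs = Suc k"
    by blast
  then show ?thesis
    unfolding dist_def by (rule LeastI_ex)
qed

lemma dist_le_walk:
  assumes "is_walk V E xs" "hd xs = u" "last xs = v" "length xs = Suc k"
  shows "dist V E u v \<le> k"
  unfolding dist_def by (rule Least_le) (use assms in blast)

lemma dist_eq_0_iff:
  assumes "u \<in> V" "v \<in> V"
  shows "dist V E u v = 0 \<longleftrightarrow> u = v"
proof
  assume "dist V E u v = 0"
  then obtain xs where "hd xs = u" "last xs = v" "length xs = 1"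
    using shortest_walk_exists[OF assms] by auto
  then show "u = v"
    by (cases xs) auto
next
  assume "u = v"
  then show "dist V E u v = 0"
    using dist_le_walk[of "[u]" u u 0] assms unfolding is_walk_def by auto
qed

lemma dist_eq_1_iff:
  assumes "u \<in> V" "v \<in> V"
  shows "dist V E u v = 1 \<longleftrightarrow> E u v"
proof
  assume "dist V E u v = 1"
  then obtain xs where xs: "is_walk V E xs" "hd xs = u" "last xs = v" "length xs = 2"
    using shortest_walk_exists[OF assms] by auto
  then obtain a b where "xs = [a, b]"
    by (cases xs; cases "tl xs") auto
  with xs show "E u v"
    unfolding is_walk_def by auto
next
  assume uv: "E u v"
  then have "is_walk V E [u, v]"
    using assms unfolding is_walk_def by (auto simp: less_Suc_eq)
  then have "dist V E u v \<le> 1"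
    using dist_le_walk[of "[u, v]" u v 1] by simp
  moreover have "u \<noteq> v"
    using uv edge_irrefl by blast
  ultimately show "dist V E u v = 1"
    using dist_eq_0_iff[OF assms] by linarith
qed

lemma exists_neighbour:
  assumes "s \<in> V" "2 \<le> card V"
  shows "\<exists>t. E s t"
proof -
  have "V \<noteq> {s}"
    using assms(2) by auto
  then obtain v where v: "v \<in> V" "v \<noteq> s"
    using assms(1) by blast
  obtain xs where xs: "is_walk V E xs" "hd xs = s" "last xs = v"
    "length xs = Suc (dist V E s v)"
    using shortest_walk_exists[OF assms(1) v(1)] by blast
  have "dist V E s v \<noteq> 0"
    using dist_eq_0_iff assms(1) v by auto
  then have "Suc 0 < length xs"
    using xs(4) by simp
  moreover have "xs ! 0 = s"
    using xs(1,2) unfolding is_walk_def by (simp add: hd_conv_nth)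
  ultimately show ?thesis
    using xs(1) unfolding is_walk_def by metis
qed

lemma set_dist_le:
  "X \<subseteq> V \<Longrightarrow> x \<in> X \<Longrightarrow> set_dist V E s X \<le> dist V E s x"
  unfolding set_dist_def using finite_V by (intro Min_le) (auto intro: finite_subset)

lemma set_dist_attained:
  assumes "X \<subseteq> V" "X \<noteq> {}"
  obtains x where "x \<in> X" "set_dist V E s X = dist V E s x"
proof -
  have "set_dist V E s X \<in> dist V E s ` X"
    unfolding set_dist_def using assms finite_V by (intro Min_in) (auto intro: finite_subset)
  then show ?thesis
    using that by blast
qed

lemma set_dist_eq_0_iff:
  assumes "X \<subseteq> V" "X \<noteq> {}" "s \<in> V"
  shows "set_dist V E s X = 0 \<longleftrightarrow> s \<in> X"
proof
  assume "set_dist V E s X = 0"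
  then show "s \<in> X"
    using assms dist_eq_0_iff by (metis set_dist_attained subsetD)
next
  assume "s \<in> X"
  then show "set_dist V E s X = 0"
    using set_dist_le[OF assms(1) \<open>s \<in> X\<close>, of s] dist_eq_0_iff[of s s] assms(3) by simp
qed

lemma set_dist_eq_1_iff:
  assumes "X \<subseteq> V" "X \<noteq> {}" "s \<in> V" "s \<notin> X"
  shows "set_dist V E s X = 1 \<longleftrightarrow> (\<exists>x\<in>X. E s x)"
proof
  assume "set_dist V E s X = 1"
  then show "\<exists>x\<in>X. E s x"
    using assms dist_eq_1_iff by (metis set_dist_attained subsetD)
next
  assume "\<exists>x\<in>X. E s x"
  then obtain x where "x \<in> X" "E s x"
    by blast
  then have "set_dist V E s X \<le> 1"
    using set_dist_le[OF assms(1), of x s] dist_eq_1_iff[of s x] assms(1,3) by auto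
  moreover have "set_dist V E s X \<noteq> 0"
    using set_dist_eq_0_iff assms by blast
  ultimately show "set_dist V E s X = 1"
    by simp
qed

lemma set_dist_insert:
  "X \<subseteq> V \<Longrightarrow> X \<noteq> {} \<Longrightarrow> set_dist V E s (insert v X) = min (dist V E s v) (set_dist V E s X)"
  unfolding set_dist_def using finite_V by (simp add: Min_insert finite_subset)

lemma solid_resolving_V: "solid_resolving V E l V"
  unfolding solid_resolving_def
proof (intro conjI allI impI)
  fix X Y
  assume XY: "X \<subseteq> V \<and> Y \<subseteq> V \<and> X \<noteq> {} \<and> Y \<noteq> {} \<and> card X \<le> l \<and> X \<noteq> Y"
  then obtain s where "s \<in> V" "s \<in> X \<longleftrightarrow> s \<notin> Y"
    by blast
  then show "\<exists>s\<in>V. set_dist V E s X \<noteq> set_dist V E s Y"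
    using set_dist_eq_0_iff XY by metis
qed simp

lemma solid_resolving_card_ge:
  assumes "solid_resolving V E l S" "1 \<le> l" "l < card V"
  shows "l + 1 \<le> card S"
proof (rule ccontr)
  assume "\<not> l + 1 \<le> card S"
  then have card_S: "card S \<le> l"
    by simp
  have SV: "S \<subseteq> V"
    using solid_resolving_subset[OF assms(1)] .
  show False
  proof (cases "S = {}")
    case True
    have "V \<noteq> {}"
      using assms(3) by auto
    then obtain x where x: "x \<in> V"
      by blast
    have "V \<noteq> {x}"
      using assms(2,3) by auto
    then obtain y where "y \<in> V" "y \<noteq> x"
      using x by blast
    then have "\<exists>s\<in>S. set_dist V E s {x} \<noteq> set_dist V E s {y}"
      using assms(1,2) x unfolding solid_resolving_def by auto
    then show False
      using True by blast
  next
    case False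
    have "S \<noteq> V"
      using card_S assms(3) by auto
    then obtain s where "s \<in> S" "set_dist V E s S \<noteq> set_dist V E s V"
      using assms(1) False SV card_S unfolding solid_resolving_def by blast
    moreover have "V \<noteq> {}"
      using False SV by blast
    ultimately show False
      using set_dist_eq_0_iff[OF SV False] set_dist_eq_0_iff[of V] SV by auto
  qed
qed

lemma star_leaves_solid_resolving:
  assumes star: "is_star_centre V E c" and "l < card V - 1"
  shows "solid_resolving V E l (V - {c})"
  unfolding solid_resolving_def
proof (intro conjI allI impI)
  fix X Y
  assume XY: "X \<subseteq> V \<and> Y \<subseteq> V \<and> X \<noteq> {} \<and> Y \<noteq> {} \<and> card X \<le> l \<and> X \<noteq> Y"
  show "\<exists>s\<in>V - {c}. set_dist V E s X \<noteq> set_dist V E s Y"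
  proof (rule ccontr)
    assume "\<not> ?thesis"
    then have same_dist: "set_dist V E s X = set_dist V E s Y" if "s \<in> V - {c}" for s
      using that by blast
    have same_leaves: "s \<in> X \<longleftrightarrow> s \<in> Y" if "s \<in> V - {c}" for s
      using same_dist[OF that] set_dist_eq_0_iff[of X s] set_dist_eq_0_iff[of Y s] XY that by auto
    have "c \<in> V"
      using star unfolding is_star_centre_def by blast
    then have "card X < card (V - {c})"
      using XY assms(2) finite_V by simp
    moreover have "finite X"
      using XY finite_V finite_subset by blast
    ultimately have "\<not> V - {c} \<subseteq> X"
      using card_mono by (metis not_le)
    then obtain s where s: "s \<in> V - {c}" "s \<notin> X"
      by blast
    then have "s \<notin> Y"
      using same_leaves by blast
    have leaf_nbrs: "(\<exists>x\<in>Z. E s x) \<longleftrightarrow> c \<in> Z" if "Z \<subseteq> V" for Z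
      using star s that unfolding is_star_centre_def by blast
    have "c \<in> X \<longleftrightarrow> c \<in> Y"
      using same_dist[OF s(1)] set_dist_eq_1_iff[of X s] set_dist_eq_1_iff[of Y s] leaf_nbrs XY s
        \<open>s \<notin> Y\<close> by auto
    then show False
      using same_leaves XY by blast
  qed
qed simp

context
  fixes l and S :: "'a set"
  assumes resolving: "solid_resolving V E l S" and card_S: "card S = l + 1" and proper: "S \<noteq> V"
begin

lemmas resolving_subset = solid_resolving_subset[OF resolving]

lemma resolving_independent:
  assumes "s \<in> S" "t \<in> S"
  shows "\<not> E s t"
proof
  assume st: "E s t"
  define X where "X = S - {s}"
  define Y where "Y = V - {s}"
  have XY: "X \<subseteq> V" "Y \<subseteq> V" "t \<in> X" "t \<in> Y" "s \<notin> X" "s \<notin> Y" "X \<noteq> Y"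
    using resolving_subset proper assms st edge_irrefl unfolding X_def Y_def by auto
  have "card X = l"
    unfolding X_def using card_S assms(1) by simp
  then obtain r where r: "r \<in> S" "set_dist V E r X \<noteq> set_dist V E r Y"
    using resolving XY unfolding solid_resolving_def by (metis empty_iff order_refl)
  have "r \<in> V"
    using r resolving_subset by blast
  show False
  proof (cases "r = s")
    case True
    have "set_dist V E s X = 1" "set_dist V E s Y = 1"
      using set_dist_eq_1_iff XY st \<open>r \<in> V\<close> True by (metis empty_iff)+
    then show False
      using r True by simp
  next
    case False
    then have "r \<in> X" "r \<in> Y"
      using r resolving_subset unfolding X_def Y_def by auto
    then show False
      using r set_dist_eq_0_iff XY \<open>r \<in> V\<close> by (metis empty_iff)
  qed
qed

text \<open>Only \<open>s'\<close> can separate \<open>X = {u} \<union> (S - {s, s'})\<close> from \<open>X \<union> {v}\<close>: the other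
  vertices of \<open>S\<close> are at distance 0 from both sets, and \<open>s\<close> at distance 1 through \<open>u\<close>.\<close>
lemma dist_lt_of_outside_neighbour:
  assumes "s \<in> S" "s' \<in> S" "s \<noteq> s'" "E s u" "u \<notin> S" "v \<in> V" "v \<notin> S" "v \<noteq> u"
  shows "dist V E s' v < dist V E s' u"
proof -
  define X where "X = insert u (S - {s, s'})"
  define Y where "Y = insert v X"
  have "u \<in> V"
    using assms(4) edge_in_V by blast
  have XY: "X \<subseteq> V" "Y \<subseteq> V" "X \<noteq> {}" "X \<noteq> Y" "u \<in> X" "s \<notin> X" "s' \<notin> X"
    using resolving_subset assms \<open>u \<in> V\<close> unfolding X_def Y_def by auto
  have "finite S"
    using resolving_subset finite_V finite_subset by blast
  then have "2 \<le> card S"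
    using card_mono[of S "{s, s'}"] assms(1,2,3) by simp
  then have "card X = l"
    unfolding X_def using card_S assms(1,2,3,5) \<open>finite S\<close> by (simp add: card_Diff_subset)
  then obtain r where r: "r \<in> S" "set_dist V E r X \<noteq> set_dist V E r Y"
    using resolving XY unfolding solid_resolving_def Y_def by (metis insert_not_empty order_refl)
  have Y_dist: "set_dist V E r Y = min (dist V E r v) (set_dist V E r X)"
    unfolding Y_def using set_dist_insert XY by blast
  have "r \<in> V"
    using r resolving_subset by blast
  consider "r = s" | "r = s'" | "r \<in> X"
    using r unfolding X_def by blast
  then show ?thesis
  proof cases
    case 1
    have "set_dist V E s X = 1"
      using set_dist_eq_1_iff XY assms(4) \<open>r \<in> V\<close> 1 by blast
    moreover have "dist V E s v \<noteq> 0"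
      using dist_eq_0_iff assms(1,6,7) \<open>r \<in> V\<close> 1 by blast
    ultimately show ?thesis
      using r Y_dist 1 by simp
  next
    case 2
    then show ?thesis
      using r Y_dist set_dist_le[OF XY(1,5), of s'] by (simp add: min_def split: if_splits)
  next
    case 3
    then show ?thesis
      using r set_dist_eq_0_iff XY \<open>r \<in> V\<close> unfolding Y_def by (metis insertCI insert_not_empty)
  qed
qed

lemma card_resolving_less: "card S < card V"
  using psubset_card_mono[OF finite_V] resolving_subset proper by blast

lemma outside_vertex_unique:
  assumes "2 \<le> l" "s \<in> S" "E s u" "v \<in> V" "v \<notin> S"
  shows "v = u"
proof (rule ccontr)
  assume "v \<noteq> u"
  have "u \<in> V" "u \<notin> S"
    using assms(2,3) edge_in_V resolving_independent by blast+
  have "finite S"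
    using resolving_subset finite_V finite_subset by blast
  have "card (S - {s}) \<noteq> 0"
    using card_S assms(1,2) \<open>finite S\<close> by simp
  then have "S - {s} \<noteq> {}"
    by (metis card.empty)
  then obtain s' where s': "s' \<in> S" "s \<noteq> s'"
    by blast
  have "card (S - {s, s'}) \<noteq> 0"
    using card_S assms(1,2) s' \<open>finite S\<close> by (simp add: card_Diff_subset)
  then have "S - {s, s'} \<noteq> {}"
    by (metis card.empty)
  then obtain s'' where s'': "s'' \<in> S" "s \<noteq> s''" "s' \<noteq> s''"
    by blast
  have "2 \<le> card V"
    using card_resolving_less card_S by simp
  moreover have "s' \<in> V"
    using s' resolving_subset by blast
  ultimately obtain w where w: "E s' w"
    using exists_neighbour by blast
  have "w \<in> V" "w \<notin> S"
    using w s' edge_in_V resolving_independent by blast+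
  have v_closer: "dist V E s' v < dist V E s' u"
    using dist_lt_of_outside_neighbour[OF assms(2) s' assms(3) \<open>u \<notin> S\<close> assms(4,5) \<open>v \<noteq> u\<close>] .
  show False
  proof (cases "w = u")
    case True
    have "dist V E s' u = 1"
      using dist_eq_1_iff \<open>s' \<in> V\<close> \<open>u \<in> V\<close> w True by blast
    then have "dist V E s' v = 0"
      using v_closer by simp
    then show False
      using dist_eq_0_iff \<open>s' \<in> V\<close> s' assms(4,5) by blast
  next
    case False
    have "dist V E s'' u < dist V E s'' w"
      using dist_lt_of_outside_neighbour[OF s'(1) s''(1,3) w \<open>w \<notin> S\<close> \<open>u \<in> V\<close> \<open>u \<notin> S\<close>] False
      by blast
    moreover have "dist V E s'' w < dist V E s'' u"
      using dist_lt_of_outside_neighbour[OF assms(2) s''(1,2) assms(3) \<open>u \<notin> S\<close> \<open>w \<in> V\<close> \<open>w \<notin> S\<close>] False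
      by blast
    ultimately show False
      by simp
  qed
qed

lemma resolving_complement_star_centre:
  assumes "2 \<le> l"
  obtains c where "c \<notin> S" "V = insert c S" "is_star_centre V E c"
proof -
  have "S \<noteq> {}"
    using card_S by auto
  then obtain s where s: "s \<in> S"
    by blast
  have "2 \<le> card V"
    using card_resolving_less card_S by simp
  moreover have "s \<in> V"
    using s resolving_subset by blast
  ultimately obtain c where c: "E s c"
    using exists_neighbour by blast
  have "c \<in> V" "c \<notin> S"
    using c s edge_in_V resolving_independent by blast+
  have V_eq: "V = insert c S"
    using outside_vertex_unique[OF assms s c] resolving_subset \<open>c \<in> V\<close> by blast
  have adjacent_c: "E x c" if "x \<in> S" for x
  proof -
    have "x \<in> V"
      using that resolving_subset by blast
    then obtain t where t: "E x t"
      using exists_neighbour \<open>2 \<le> card V\<close> by blast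
    have "t \<in> V" "t \<notin> S"
      using t edge_in_V resolving_independent that by blast+
    then show ?thesis
      using t outside_vertex_unique[OF assms s c] by blast
  qed
  have "E x y \<longleftrightarrow> (x = c) \<noteq> (y = c)" if "x \<in> V" "y \<in> V" for x y
  proof (cases "x = c \<or> y = c")
    case True
    then show ?thesis
      using that V_eq adjacent_c edge_irrefl edge_sym by auto
  next
    case False
    then show ?thesis
      using that V_eq resolving_independent by auto
  qed
  then have "is_star_centre V E c"
    unfolding is_star_centre_def using \<open>c \<in> V\<close> by blast
  from \<open>c \<notin> S\<close> V_eq this show ?thesis
    by (rule that)
qed

end

lemma ex_solid_resolving_card_Suc_iff:
  assumes "2 \<le> l"
  shows "(\<exists>S. solid_resolving V E l S \<and> card S = l + 1) \<longleftrightarrow>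
           card V = l + 1 \<or> card V = l + 2 \<and> (\<exists>c. is_star_centre V E c)"
proof (intro iffI; elim exE conjE disjE)
  fix S
  assume S: "solid_resolving V E l S" "card S = l + 1"
  show "card V = l + 1 \<or> card V = l + 2 \<and> (\<exists>c. is_star_centre V E c)"
  proof (cases "S = V")
    case False
    then obtain c where "c \<notin> S" "V = insert c S" "is_star_centre V E c"
      using resolving_complement_star_centre S assms by metis
    then show ?thesis
      using S finite_V by auto
  qed (use S in simp)
next
  assume "card V = l + 1"
  then show "\<exists>S. solid_resolving V E l S \<and> card S = l + 1"
    using solid_resolving_V by blast
next
  fix c
  assume card_V: "card V = l + 2" and star: "is_star_centre V E c"
  then have "card (V - {c}) = l + 1"
    unfolding is_star_centre_def by simp
  moreover have "solid_resolving V E l (V - {c})"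
    using star_leaves_solid_resolving[OF star] card_V by simp
  ultimately show "\<exists>S. solid_resolving V E l S \<and> card S = l + 1"
    by blast
qed

end

lemma solid_metric_dim_eq_iff:
  assumes "\<exists>S. solid_resolving V E l S" "\<And>S. solid_resolving V E l S \<Longrightarrow> m \<le> card S"
  shows "solid_metric_dim V E l = m \<longleftrightarrow> (\<exists>S. solid_resolving V E l S \<and> card S = m)"
proof
  assume "solid_metric_dim V E l = m"
  moreover have "\<exists>S. solid_resolving V E l S \<and> card S = solid_metric_dim V E l"
    unfolding solid_metric_dim_def by (rule LeastI_ex) (use assms(1) in blast)
  ultimately show "\<exists>S. solid_resolving V E l S \<and> card S = m"
    by simp
next
  assume "\<exists>S. solid_resolving V E l S \<and> card S = m"
  then show "solid_metric_dim V E l = m"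
    unfolding solid_metric_dim_def by (rule Least_equality) (use assms(2) in auto)
qed

lemma graph_iso_star_iff:
  "graph_iso V E (star_vertices m) (star_edge m) \<longleftrightarrow> card V = m + 1 \<and> (\<exists>c. is_star_centre V E c)"
proof -
  have star_edge_iff: "star_edge m (f x) (f y) \<longleftrightarrow> (x = c) \<noteq> (y = c)"
    if "\<forall>x\<in>V. f x \<le> m \<and> (f x = 0 \<longleftrightarrow> x = c)" "x \<in> V" "y \<in> V" for f c x y
    using that unfolding star_edge_def by auto
  show ?thesis
  proof
    assume "graph_iso V E (star_vertices m) (star_edge m)"
    then obtain f where f: "bij_betw f V {0..m}" "\<forall>x\<in>V. \<forall>y\<in>V. E x y \<longleftrightarrow> star_edge m (f x) (f y)"
      unfolding graph_iso_def star_vertices_def by blast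
    then obtain c where c: "c \<in> V" "f c = 0"
      by (metis atLeastAtMost_iff bij_betw_iff_bijections le0)
    have "\<forall>x\<in>V. f x \<le> m \<and> (f x = 0 \<longleftrightarrow> x = c)"
      using f(1) c unfolding bij_betw_def inj_on_def by auto
    then have "is_star_centre V E c"
      unfolding is_star_centre_def using c(1) f(2) star_edge_iff by blast
    moreover have "card V = m + 1"
      using bij_betw_same_card[OF f(1)] by simp
    ultimately show "card V = m + 1 \<and> (\<exists>c. is_star_centre V E c)"
      by blast
  next
    assume "card V = m + 1 \<and> (\<exists>c. is_star_centre V E c)"
    then obtain c where card_V: "card V = m + 1" and c: "is_star_centre V E c"
      by blast
    have "c \<in> V" "finite V"
      using c card_V card.infinite unfolding is_star_centre_def by fastforce+
    then have "card (V - {c}) = card {1..m}"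
      using card_V by simp
    then obtain g where g: "bij_betw g (V - {c}) {1..m}"
      using \<open>finite V\<close> by (metis finite_Diff finite_same_card_bij finite_atLeastAtMost)
    define f where "f = g(c := 0)"
    have "bij_betw f (V - {c}) {1..m}"
      using g unfolding f_def by (rule bij_betw_cong[THEN iffD1, rotated]) auto
    then have "bij_betw f ((V - {c}) \<union> {c}) ({1..m} \<union> {f c})"
      by (intro notIn_Un_bij_betw) (auto simp: f_def)
    moreover have "{1..m} \<union> {f c} = {0..m}"
      by (auto simp: f_def)
    ultimately have "bij_betw f V {0..m}"
      using \<open>c \<in> V\<close> by (simp add: insert_absorb)
    moreover have f_centre: "\<forall>x\<in>V. f x \<le> m \<and> (f x = 0 \<longleftrightarrow> x = c)"
    proof
      fix x
      assume "x \<in> V"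
      then show "f x \<le> m \<and> (f x = 0 \<longleftrightarrow> x = c)"
        using bij_betw_apply[OF g, of x] unfolding f_def by (cases "x = c") auto
    qed
    then have "\<forall>x\<in>V. \<forall>y\<in>V. E x y \<longleftrightarrow> star_edge m (f x) (f y)"
      using c star_edge_iff[OF f_centre] unfolding is_star_centre_def by simp
    ultimately show "graph_iso V E (star_vertices m) (star_edge m)"
      unfolding graph_iso_def star_vertices_def by blast
  qed
qed

theorem mainTheorem6:
  fixes V :: "'a set" and E :: "'a \<Rightarrow> 'a \<Rightarrow> bool" and l :: nat
  assumes "simple_graph V E" and "connected_graph V E"
    and "2 \<le> l" and "l \<le> card V - 1"
  shows "solid_metric_dim V E l = l + 1 \<longleftrightarrow>
           (card V = l + 1 \<or> graph_iso V E (star_vertices (l + 1)) (star_edge (l + 1)))"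
proof -
  interpret connected_simple_graph V E
    using assms(1,2) by unfold_locales
  have "solid_metric_dim V E l = l + 1 \<longleftrightarrow> (\<exists>S. solid_resolving V E l S \<and> card S = l + 1)"
    using solid_resolving_V solid_resolving_card_ge assms(3,4)
    by (intro solid_metric_dim_eq_iff) fastforce+
  then show ?thesis
    unfolding graph_iso_star_iff using ex_solid_resolving_card_Suc_iff[OF assms(3)] by simp
qed

end
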